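(* Let $A,B\in\mathscr{B}(\Omega)$ with $\underline{P}(B)>0$ and $\underline{P}(B^c)>0$, and let $\mathcal{B}=\{B,B^c\}$. If $\mathcal{B}$ dilates $A$ under the Geometric rule, then it contracts $A$ under Dempster's rule. Similarly, if $\mathcal{B}$ dilates $A$ under Dempster's rule, then it contracts $A$ under the Geometric rule. In both cases, the contraction is strict if the corresponding dilation is strict.
   Context: $\Omega$ is a separable, completely metrizable space with Borel $\sigma$-algebra $\mathscr{B}(\Omega)$; $\underline{P}$ is a Choquet capacity of order 2 on $\mathscr{B}(\Omega)$ (a coherent lower probability with weakly compact set of dominating measures satisfying $\underline{P}(A\cup B)\ge\underline{P}(A)+\underline{P}(B)-\underline{P}(A\cap B)$ for all $A,B$); $\Pi=\{P:P\ge\underline{P}\}$, $\underline{P}(A)=\inf_{P\in\Pi}P(A)$, $\overline{P}(A)=\sup_{P\in\Pi}P(A)=1-\underline{P}(A^c)$. Dempster's rule: $\overline{P}_{\mathfrak{D}}(A\mid Z)=\overline{P}(A\cap Z)/\overline{P}(Z)$, $\underline{P}_{\mathfrak{D}}(A\mid Z)=1-\overline{P}_{\mathfrak{D}}(A^c\mid Z)$. Geometric rule: $\underline{P}_{\mathfrak{G}}(A\mid Z)=\underline{P}(A\cap Z)/\underline{P}(Z)$, $\overline{P}_{\mathfrak{G}}(A\mid Z)=1-\underline{P}_{\mathfrak{G}}(A^c\mid Z)$. For a rule with conditional lower/upper probabilities $\underline{P}_\bullet,\overline{P}_\bullet$: $\mathcal{B}$ strictly dilates $A$ if $\sup_{Z\in\mathcal{B}}\underline{P}_\bullet(A\mid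 Z)<\underline{P}(A)\le\overline{P}(A)<\inf_{Z\in\mathcal{B}}\overline{P}_\bullet(A\mid Z)$, and dilates $A$ if this holds with either (but not both) outer strict inequality allowed to be an equality; $\mathcal{B}$ strictly contracts $A$ if $\underline{P}(A)<\inf_{Z\in\mathcal{B}}\underline{P}_\bullet(A\mid Z)\le\sup_{Z\in\mathcal{B}}\overline{P}_\bullet(A\mid Z)<\overline{P}(A)$, and contracts $A$ if this holds with either (but not both) outer strict inequality allowed to be an equality. *)

theory Defs
  imports "HOL-Probability.Probability"
begin

definition weak_conv_measures :: "(nat \<Rightarrow> 'a::topological_space measure) \<Rightarrow> 'a measure \<Rightarrow> bool" where
  "weak_conv_measures Ms M \<longleftrightarrow>
     (\<forall>f :: 'a \<Rightarrow> real. continuous_on UNIV f \<and> bounded (range f) \<longrightarrow>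
        (\<lambda>n. integral\<^sup>L (Ms n) f) \<longlonglongrightarrow> integral\<^sup>L M f)"

text \<open>Weak compactness of a set of Borel probability measures. On a Polish space the weak
  topology on probability measures is metrizable, so compactness is sequential compactness.\<close>
definition weakly_seq_compact_measures :: "'a::topological_space measure set \<Rightarrow> bool" where
  "weakly_seq_compact_measures S \<longleftrightarrow>
     (\<forall>Ms. (\<forall>n. Ms n \<in> S) \<longrightarrow>
        (\<exists>(r::nat \<Rightarrow> nat) M. strict_mono r \<and> M \<in> S \<and> weak_conv_measures (Ms \<circ> r) M))"

definition credal_set :: "('a::topological_space set \<Rightarrow> real) \<Rightarrow> 'a measure set" where
  "credal_set lowP = {M. prob_space M \<and> sets M = sets borel \<and>
                         (\<forall>A \<in> sets borel. lowP A \<le> measure M A)}"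

definition upP :: "('a set \<Rightarrow> real) \<Rightarrow> 'a set \<Rightarrow> real" where
  "upP lowP A = 1 - lowP (- A)"

definition choquet2 :: "('a::topological_space set \<Rightarrow> real) \<Rightarrow> bool" where
  "choquet2 lowP \<longleftrightarrow>
     credal_set lowP \<noteq> {} \<and>
     weakly_seq_compact_measures (credal_set lowP) \<and>
     (\<forall>A \<in> sets borel. lowP A = (INF M \<in> credal_set lowP. measure M A)) \<and>
     (\<forall>A \<in> sets borel. \<forall>B \<in> sets borel.
        lowP (A \<union> B) \<ge> lowP A + lowP B - lowP (A \<inter> B))"

definition upD :: "('a set \<Rightarrow> real) \<Rightarrow> 'a set \<Rightarrow> 'a set \<Rightarrow> real" where
  "upD lowP A Z = upP lowP (A \<inter> Z) / upP lowP Z"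

definition lowD :: "('a set \<Rightarrow> real) \<Rightarrow> 'a set \<Rightarrow> 'a set \<Rightarrow> real" where
  "lowD lowP A Z = 1 - upD lowP (- A) Z"

definition lowG :: "('a set \<Rightarrow> real) \<Rightarrow> 'a set \<Rightarrow> 'a set \<Rightarrow> real" where
  "lowG lowP A Z = lowP (A \<inter> Z) / lowP Z"

definition upG :: "('a set \<Rightarrow> real) \<Rightarrow> 'a set \<Rightarrow> 'a set \<Rightarrow> real" where
  "upG lowP A Z = 1 - lowG lowP (- A) Z"

text \<open>A rule is given by its conditional lower and upper probabilities lowC, upC
  (as functions of the event A and the conditioning event Z).\<close>

definition strictly_dilates ::
  "('a set \<Rightarrow> real) \<Rightarrow> ('a set \<Rightarrow> 'a set \<Rightarrow> real) \<Rightarrow> ('a set \<Rightarrow> 'a set \<Rightarrow> real)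
   \<Rightarrow> 'a set set \<Rightarrow> 'a set \<Rightarrow> bool" where
  "strictly_dilates lowP lowC upC \<B> A \<longleftrightarrow>
     (SUP Z \<in> \<B>. lowC A Z) < lowP A \<and> lowP A \<le> upP lowP A \<and> upP lowP A < (INF Z \<in> \<B>. upC A Z)"

definition dilates ::
  "('a set \<Rightarrow> real) \<Rightarrow> ('a set \<Rightarrow> 'a set \<Rightarrow> real) \<Rightarrow> ('a set \<Rightarrow> 'a set \<Rightarrow> real)
   \<Rightarrow> 'a set set \<Rightarrow> 'a set \<Rightarrow> bool" where
  "dilates lowP lowC upC \<B> A \<longleftrightarrow>
     lowP A \<le> upP lowP A \<and>
     (((SUP Z \<in> \<B>. lowC A Z) < lowP A \<and> upP lowP A \<le> (INF Z \<in> \<B>. upC A Z)) \<or>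
      ((SUP Z \<in> \<B>. lowC A Z) \<le> lowP A \<and> upP lowP A < (INF Z \<in> \<B>. upC A Z)))"

definition strictly_contracts ::
  "('a set \<Rightarrow> real) \<Rightarrow> ('a set \<Rightarrow> 'a set \<Rightarrow> real) \<Rightarrow> ('a set \<Rightarrow> 'a set \<Rightarrow> real)
   \<Rightarrow> 'a set set \<Rightarrow> 'a set \<Rightarrow> bool" where
  "strictly_contracts lowP lowC upC \<B> A \<longleftrightarrow>
     lowP A < (INF Z \<in> \<B>. lowC A Z) \<and> (INF Z \<in> \<B>. lowC A Z) \<le> (SUP Z \<in> \<B>. upC A Z) \<and>
     (SUP Z \<in> \<B>. upC A Z) < upP lowP A"

definition contracts ::
  "('a set \<Rightarrow> real) \<Rightarrow> ('a set \<Rightarrow> 'a set \<Rightarrow> real) \<Rightarrow> ('a set \<Rightarrow> 'a set \<Rightarrow> real)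
   \<Rightarrow> 'a set set \<Rightarrow> 'a set \<Rightarrow> bool" where
  "contracts lowP lowC upC \<B> A \<longleftrightarrow>
     (INF Z \<in> \<B>. lowC A Z) \<le> (SUP Z \<in> \<B>. upC A Z) \<and>
     ((lowP A < (INF Z \<in> \<B>. lowC A Z) \<and> (SUP Z \<in> \<B>. upC A Z) \<le> upP lowP A) \<or>
      (lowP A \<le> (INF Z \<in> \<B>. lowC A Z) \<and> (SUP Z \<in> \<B>. upC A Z) < upP lowP A))"

end

theory Submission
  imports Defs
begin

text \<open>Write \<open>u = upP A\<close>, \<open>y = lowP Z\<close>. Two-monotonicity applied to \<open>-A\<close> and \<open>Z\<close> yields
  \<open>y (upG(A|Z) - u) \<le> (1 - y) (u - upD(A|-Z))\<close>, and dually for the lower bounds. Hence the Geometric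
  update on \<open>Z\<close> and the Dempster update on \<open>-Z\<close> always lie on opposite sides of the unconditional
  bounds, weakly or strictly together. As \<open>{B, -B}\<close> is closed under complement, a (strict)
  dilation under one rule turns into a (strict) contraction under the other.\<close>

lemma choquet2_two_monotone:
  assumes "choquet2 lowP" "X \<in> sets borel" "Y \<in> sets borel"
  shows "lowP X + lowP Y \<le> lowP (X \<union> Y) + lowP (X \<inter> Y)"
  using assms unfolding choquet2_def by force

lemma choquet2_empty:
  assumes "choquet2 lowP"
  shows "lowP {} = 0"
proof -
  have "credal_set lowP \<noteq> {}" "lowP {} = (INF M \<in> credal_set lowP. measure M {})"
    using assms unfolding choquet2_def by auto
  then show ?thesis by simp
qed

lemma choquet2_UNIV:
  assumes "choquet2 lowP"
  shows "lowP UNIV = 1"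
proof -
  have ne: "credal_set lowP \<noteq> {}" and env: "lowP UNIV = (INF M \<in> credal_set lowP. measure M UNIV)"
    using assms unfolding choquet2_def by auto
  have "measure M UNIV = 1" if "M \<in> credal_set lowP" for M
  proof -
    have "prob_space M" "sets M = sets borel"
      using that unfolding credal_set_def by auto
    then show ?thesis
      using sets_eq_imp_space_eq[of M borel] prob_space.prob_space[of M] by simp
  qed
  then show ?thesis
    using ne env by simp
qed

lemma choquet2_superadditive:
  assumes "choquet2 lowP" "X \<in> sets borel" "Y \<in> sets borel" "X \<inter> Y = {}"
  shows "lowP X + lowP Y \<le> lowP (X \<union> Y)"
  using choquet2_two_monotone[OF assms(1-3)] choquet2_empty[OF assms(1)] assms(4) by simp

lemma lowP_le_upP:
  assumes "choquet2 lowP" "X \<in> sets borel"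
  shows "lowP X \<le> upP lowP X"
  using choquet2_superadditive[OF assms(1,2), of "- X"] assms choquet2_UNIV[OF assms(1)]
  unfolding upP_def by auto

lemma upP_pos:
  assumes "choquet2 lowP" "X \<in> sets borel" "lowP X > 0"
  shows "upP lowP X > 0"
  using lowP_le_upP[OF assms(1,2)] assms(3) by simp

lemma lowG_le_upG:
  assumes "choquet2 lowP" "X \<in> sets borel" "Z \<in> sets borel" "lowP Z > 0"
  shows "lowG lowP X Z \<le> upG lowP X Z"
proof -
  have "lowP (X \<inter> Z) + lowP (- X \<inter> Z) \<le> lowP (X \<inter> Z \<union> - X \<inter> Z)"
    using assms by (intro choquet2_superadditive) auto
  also have "X \<inter> Z \<union> - X \<inter> Z = Z"
    by auto
  finally show ?thesis
    using assms(4) unfolding upG_def lowG_def by (simp add: field_simps)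
qed

lemma lowD_le_upD:
  assumes "choquet2 lowP" "X \<in> sets borel" "Z \<in> sets borel" "lowP Z > 0"
  shows "lowD lowP X Z \<le> upD lowP X Z"
proof -
  have "lowP (X \<union> - Z) + lowP (- X \<union> - Z) \<le> lowP ((X \<union> - Z) \<union> (- X \<union> - Z)) + lowP ((X \<union> - Z) \<inter> (- X \<union> - Z))"
    using assms by (intro choquet2_two_monotone) auto
  moreover have "(X \<union> - Z) \<union> (- X \<union> - Z) = UNIV" "(X \<union> - Z) \<inter> (- X \<union> - Z) = - Z"
    by auto
  ultimately have "lowP (X \<union> - Z) + lowP (- X \<union> - Z) \<le> 1 + lowP (- Z)"
    using choquet2_UNIV[OF assms(1)] by simp
  moreover have "upP lowP Z > 0"
    using upP_pos[OF assms(1,3,4)] .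
  ultimately have "1 \<le> (1 - lowP (- X \<union> - Z)) / upP lowP Z + (1 - lowP (X \<union> - Z)) / upP lowP Z"
    unfolding upP_def by (simp add: add_divide_distrib[symmetric] le_divide_eq)
  moreover have "- (X \<inter> Z) = - X \<union> - Z" "- (- X \<inter> Z) = X \<union> - Z"
    by auto
  ultimately show ?thesis
    unfolding lowD_def upD_def upP_def by simp
qed

lemma upG_upD_tradeoff:
  assumes "choquet2 lowP" "X \<in> sets borel" "Z \<in> sets borel" "lowP Z > 0" "lowP (- Z) > 0"
  shows "lowP Z * (upG lowP X Z - upP lowP X) \<le> upP lowP (- Z) * (upP lowP X - upD lowP X (- Z))"
proof -
  define x y w where "x = lowP (- X)" and "y = lowP Z" and "w = lowP (- X \<inter> Z)"
  have "x + y \<le> lowP (- X \<union> Z) + w"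
    using choquet2_two_monotone[OF assms(1), of "- X" Z] assms unfolding x_def y_def w_def by auto
  moreover have "lowP Z * (upG lowP X Z - upP lowP X) = x * y - w"
    using assms(4) unfolding upG_def lowG_def upP_def x_def y_def w_def by (simp add: field_simps)
  moreover have "upP lowP (- Z) > 0"
    using upP_pos[of lowP "- Z"] assms(1,3,5) by simp
  then have "upP lowP (- Z) * (upP lowP X - upD lowP X (- Z)) = (1 - y) * (1 - x) - (1 - lowP (- X \<union> Z))"
    unfolding upD_def upP_def x_def y_def by (simp add: field_simps)
  ultimately show ?thesis
    by (simp add: algebra_simps)
qed

lemma opposite_sides:
  fixes a b g d u :: real
  assumes "a > 0" "b > 0" "a * (g - u) \<le> b * (u - d)"
  shows "u \<le> g \<Longrightarrow> d \<le> u" and "u < g \<Longrightarrow> d < u"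
    and "u \<le> d \<Longrightarrow> g \<le> u" and "u < d \<Longrightarrow> g < u"
proof -
  have "0 \<le> a * (g - u) \<longleftrightarrow> u \<le> g" "0 < a * (g - u) \<longleftrightarrow> u < g"
    and "0 \<le> b * (u - d) \<longleftrightarrow> d \<le> u" "0 < b * (u - d) \<longleftrightarrow> d < u"
    using assms(1,2) by (simp_all add: zero_le_mult_iff zero_less_mult_iff)
  with assms(3) show "u \<le> g \<Longrightarrow> d \<le> u" "u < g \<Longrightarrow> d < u" "u \<le> d \<Longrightarrow> g \<le> u" "u < d \<Longrightarrow> g < u"
    by linarith+
qed

lemma upG_upD_opposite_sides:
  assumes "choquet2 lowP" "X \<in> sets borel" "Z \<in> sets borel" "lowP Z > 0" "lowP (- Z) > 0"
  shows "upP lowP X \<le> upG lowP X Z \<Longrightarrow> upD lowP X (- Z) \<le> upP lowP X"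
    and "upP lowP X < upG lowP X Z \<Longrightarrow> upD lowP X (- Z) < upP lowP X"
    and "upP lowP X \<le> upD lowP X (- Z) \<Longrightarrow> upG lowP X Z \<le> upP lowP X"
    and "upP lowP X < upD lowP X (- Z) \<Longrightarrow> upG lowP X Z < upP lowP X"
proof -
  have "upP lowP (- Z) > 0"
    using upP_pos[of lowP "- Z"] assms(1,3,5) by simp
  note sides = opposite_sides[OF assms(4) this upG_upD_tradeoff[OF assms]]
  show "upP lowP X \<le> upG lowP X Z \<Longrightarrow> upD lowP X (- Z) \<le> upP lowP X"
    and "upP lowP X < upG lowP X Z \<Longrightarrow> upD lowP X (- Z) < upP lowP X"
    and "upP lowP X \<le> upD lowP X (- Z) \<Longrightarrow> upG lowP X Z \<le> upP lowP X"
    and "upP lowP X < upD lowP X (- Z) \<Longrightarrow> upG lowP X Z < upP lowP X"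
    by (fact sides)+
qed

lemma lowG_lowD_opposite_sides:
  assumes "choquet2 lowP" "X \<in> sets borel" "Z \<in> sets borel" "lowP Z > 0" "lowP (- Z) > 0"
  shows "lowG lowP X Z \<le> lowP X \<Longrightarrow> lowP X \<le> lowD lowP X (- Z)"
    and "lowG lowP X Z < lowP X \<Longrightarrow> lowP X < lowD lowP X (- Z)"
    and "lowD lowP X (- Z) \<le> lowP X \<Longrightarrow> lowP X \<le> lowG lowP X Z"
    and "lowD lowP X (- Z) < lowP X \<Longrightarrow> lowP X < lowG lowP X Z"
  using upG_upD_opposite_sides[OF assms(1) _ assms(3-5), of "- X"] assms(2)
  unfolding upG_def lowD_def upP_def by simp_all

definition opposite_on_complements ::
  "('a set \<Rightarrow> real) \<Rightarrow> ('a set \<Rightarrow> 'a set \<Rightarrow> real) \<Rightarrow> ('a set \<Rightarrow> 'a set \<Rightarrow> real)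
   \<Rightarrow> ('a set \<Rightarrow> 'a set \<Rightarrow> real) \<Rightarrow> ('a set \<Rightarrow> 'a set \<Rightarrow> real) \<Rightarrow> 'a set set \<Rightarrow> 'a set \<Rightarrow> bool" where
  "opposite_on_complements lowP lowC upC lowC' upC' \<B> A \<longleftrightarrow>
     (\<forall>Z \<in> \<B>.
        (upP lowP A \<le> upC A Z \<longrightarrow> upC' A (- Z) \<le> upP lowP A) \<and>
        (upP lowP A < upC A Z \<longrightarrow> upC' A (- Z) < upP lowP A) \<and>
        (lowC A Z \<le> lowP A \<longrightarrow> lowP A \<le> lowC' A (- Z)) \<and>
        (lowC A Z < lowP A \<longrightarrow> lowP A < lowC' A (- Z)))"

lemma geometric_dempster_opposite:
  assumes "choquet2 lowP" "A \<in> sets borel" "B \<in> sets borel" "lowP B > 0" "lowP (- B) > 0"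
  shows "opposite_on_complements lowP (lowG lowP) (upG lowP) (lowD lowP) (upD lowP) {B, - B} A"
    and "opposite_on_complements lowP (lowD lowP) (upD lowP) (lowG lowP) (upG lowP) {B, - B} A"
proof -
  have compl_B: "- B \<in> sets borel" "lowP (- B) > 0" "lowP (- (- B)) > 0"
    using assms by auto
  note sides = upG_upD_opposite_sides[OF assms] lowG_lowD_opposite_sides[OF assms]
    upG_upD_opposite_sides[OF assms(1,2) compl_B, simplified]
    lowG_lowD_opposite_sides[OF assms(1,2) compl_B, simplified]
  show "opposite_on_complements lowP (lowG lowP) (upG lowP) (lowD lowP) (upD lowP) {B, - B} A"
    unfolding opposite_on_complements_def
    by (simp only: Set.ball_simps(5,7) double_compl) (intro conjI impI TrueI; erule sides)
  show "opposite_on_complements lowP (lowD lowP) (upD lowP) (lowG lowP) (upG lowP) {B, - B} A"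
    unfolding opposite_on_complements_def
    by (simp only: Set.ball_simps(5,7) double_compl) (intro conjI impI TrueI; erule sides)
qed

lemma
  fixes f :: "'a \<Rightarrow> 'b::conditionally_complete_linorder"
  shows SUP_pair: "(SUP z \<in> {a, b}. f z) = max (f a) (f b)"
    and INF_pair: "(INF z \<in> {a, b}. f z) = min (f a) (f b)"
  by (simp_all add: cSup_insert cInf_insert sup_max inf_min)

lemma dilates_imp_contracts_opposite:
  fixes lowC upC lowC' upC' :: "'a set \<Rightarrow> 'a set \<Rightarrow> real"
  assumes "opposite_on_complements lowP lowC upC lowC' upC' {B, - B} A"
    and "lowC' A B \<le> upC' A B"
  shows "dilates lowP lowC upC {B, - B} A \<Longrightarrow> contracts lowP lowC' upC' {B, - B} A"
    and "strictly_dilates lowP lowC upC {B, - B} A \<Longrightarrow> strictly_contracts lowP lowC' upC' {B, - B} A"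
  using assms
  unfolding opposite_on_complements_def dilates_def contracts_def strictly_dilates_def
    strictly_contracts_def SUP_pair INF_pair Set.ball_simps(5,7) double_compl
    min.bounded_iff max.bounded_iff min_less_iff_conj max_less_iff_conj min_le_iff_disj le_max_iff_disj
  by blast+

theorem theorem5p9:
  fixes lowP :: "'a::polish_space set \<Rightarrow> real" and A B :: "'a set"
  assumes "choquet2 lowP"
    and "A \<in> sets borel" and "B \<in> sets borel"
    and "lowP B > 0" and "lowP (- B) > 0"
  shows "(dilates lowP (lowG lowP) (upG lowP) {B, - B} A
            \<longrightarrow> contracts lowP (lowD lowP) (upD lowP) {B, - B} A)
       \<and> (strictly_dilates lowP (lowG lowP) (upG lowP) {B, - B} A
            \<longrightarrow> strictly_contracts lowP (lowD lowP) (upD lowP) {B, - B} A)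
       \<and> (dilates lowP (lowD lowP) (upD lowP) {B, - B} A
            \<longrightarrow> contracts lowP (lowG lowP) (upG lowP) {B, - B} A)
       \<and> (strictly_dilates lowP (lowD lowP) (upD lowP) {B, - B} A
            \<longrightarrow> strictly_contracts lowP (lowG lowP) (upG lowP) {B, - B} A)"
  using dilates_imp_contracts_opposite[OF geometric_dempster_opposite(1)[OF assms] lowD_le_upD[OF assms(1-4)]]
    dilates_imp_contracts_opposite[OF geometric_dempster_opposite(2)[OF assms] lowG_le_upG[OF assms(1-4)]]
  by blast

end
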